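(* Let $K$ be a binomial principal ideal domain and $G$ a finitely generated regular nilpotent $K$-group. Then $G\cong H\times G_0$ for any addition $G_0$ and any foundation $H$ (not necessarily associated with each other); consequently all foundations of $G$ are isomorphic to each other and all additions of $G$ are isomorphic to each other.
   Context: $K$ binomial: a characteristic-zero domain with unique binomial coefficients $\binom{k}{n}\in K$; $K$-groups are Hall's nilpotent groups with exponents in $K$. $Is(N)=\{x\in G: x^\alpha\in N\text{ for some }0\ne\alpha\in K\}$; $I(G)=Is(G')\cap Z(G)$. An addition is a $K$-subgroup $G_0\le Z(G)$ with $Z(G)=G_0\oplus I(G)$. $G$ is regular if $G=H\times G_0$ for an addition $G_0$ and a $K$-subgroup $H$ with $Is(H')\ge Z(H)$; for a regular group, such a subgroup $H$ (identified with $G/G_0$) is also called a foundation. *)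

theory Defs
  imports "HOL-Algebra.Algebra"
begin

definition binomial_domain :: "('k::{idom,ring_char_0}) itself \<Rightarrow> bool" where
  "binomial_domain _ \<longleftrightarrow>
     (\<forall>(k::'k) (n::nat). \<exists>b. of_nat (fact n) * b = (\<Prod>i<n. k - of_nat i))"

text \<open>The (unique, by characteristic zero) binomial coefficient k choose n in K.\<close>
definition kbin :: "'k::{idom,ring_char_0} \<Rightarrow> nat \<Rightarrow> 'k" where
  "kbin k n = (THE b. of_nat (fact n) * b = (\<Prod>i<n. k - of_nat i))"

definition ring_ideal :: "'k::idom set \<Rightarrow> bool" where
  "ring_ideal I \<longleftrightarrow> 0 \<in> I \<and> (\<forall>x\<in>I. \<forall>y\<in>I. x + y \<in> I) \<and> (\<forall>x\<in>I. \<forall>r. r * x \<in> I)"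

definition pid :: "('k::idom) itself \<Rightarrow> bool" where
  "pid _ \<longleftrightarrow> (\<forall>I::'k set. ring_ideal I \<longrightarrow> (\<exists>a. I = {a * x | x. True}))"

definition lprod :: "('a, 'b) monoid_scheme \<Rightarrow> 'a list \<Rightarrow> 'a" where
  "lprod G xs = foldr (\<lambda>x acc. x \<otimes>\<^bsub>G\<^esub> acc) xs \<one>\<^bsub>G\<^esub>"

fun lcs :: "('a, 'b) monoid_scheme \<Rightarrow> nat \<Rightarrow> 'a set" where
  "lcs G 0 = carrier G"
| "lcs G (Suc n) = generate G (\<Union>a\<in>lcs G n. \<Union>b\<in>carrier G.
       {a \<otimes>\<^bsub>G\<^esub> b \<otimes>\<^bsub>G\<^esub> inv\<^bsub>G\<^esub> a \<otimes>\<^bsub>G\<^esub> inv\<^bsub>G\<^esub> b})"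

definition nilpotent :: "('a, 'b) monoid_scheme \<Rightarrow> bool" where
  "nilpotent G \<longleftrightarrow> (\<exists>c. lcs G c = {\<one>\<^bsub>G\<^esub>})"

definition nilclass :: "('a, 'b) monoid_scheme \<Rightarrow> nat" where
  "nilclass G = (LEAST c. lcs G c = {\<one>\<^bsub>G\<^esub>})"

text \<open>Petresco words: petresco_list G xs n = [tau_1(xs), ..., tau_n(xs)], determined by
  x_1^n ... x_m^n = tau_1^(n choose 1) tau_2^(n choose 2) ... tau_n^(n choose n).\<close>
fun petresco_list :: "('a, 'b) monoid_scheme \<Rightarrow> 'a list \<Rightarrow> nat \<Rightarrow> 'a list" where
  "petresco_list G xs 0 = []"
| "petresco_list G xs (Suc n) =
     (let ts = petresco_list G xs n in
      ts @ [inv\<^bsub>G\<^esub> (lprod G (map (\<lambda>i. (ts ! i) [^]\<^bsub>G\<^esub> (Suc n choose Suc i)) [0..<n]))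
            \<otimes>\<^bsub>G\<^esub> lprod G (map (\<lambda>x. x [^]\<^bsub>G\<^esub> (Suc n)) xs)])"

definition kgroup :: "('a, 'b) monoid_scheme \<Rightarrow> ('a \<Rightarrow> 'k::{idom,ring_char_0} \<Rightarrow> 'a) \<Rightarrow> bool" where
  "kgroup G pw \<longleftrightarrow> group G \<and> nilpotent G \<and>
     (\<forall>x\<in>carrier G. \<forall>a. pw x a \<in> carrier G) \<and>
     (\<forall>x\<in>carrier G. pw x 1 = x) \<and>
     (\<forall>x\<in>carrier G. \<forall>a b. pw x a \<otimes>\<^bsub>G\<^esub> pw x b = pw x (a + b)) \<and>
     (\<forall>x\<in>carrier G. \<forall>a b. pw (pw x a) b = pw x (a * b)) \<and>
     (\<forall>x\<in>carrier G. \<forall>y\<in>carrier G. \<forall>a.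
        pw (inv\<^bsub>G\<^esub> y \<otimes>\<^bsub>G\<^esub> x \<otimes>\<^bsub>G\<^esub> y) a = inv\<^bsub>G\<^esub> y \<otimes>\<^bsub>G\<^esub> pw x a \<otimes>\<^bsub>G\<^esub> y) \<and>
     (\<forall>xs a. set xs \<subseteq> carrier G \<longrightarrow>
        lprod G (map (\<lambda>x. pw x a) xs) =
        lprod G (map (\<lambda>i. pw (petresco_list G xs (nilclass G) ! i) (kbin a (Suc i)))
                     [0..<nilclass G]))"

definition ksubgroup :: "('a, 'b) monoid_scheme \<Rightarrow> ('a \<Rightarrow> 'k \<Rightarrow> 'a) \<Rightarrow> 'a set \<Rightarrow> bool" where
  "ksubgroup G pw S \<longleftrightarrow> subgroup S G \<and> (\<forall>x\<in>S. \<forall>a. pw x a \<in> S)"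

definition kgen :: "('a, 'b) monoid_scheme \<Rightarrow> ('a \<Rightarrow> 'k \<Rightarrow> 'a) \<Rightarrow> 'a set \<Rightarrow> 'a set" where
  "kgen G pw S = \<Inter>{T. ksubgroup G pw T \<and> S \<subseteq> T}"

definition fin_gen_kgroup :: "('a, 'b) monoid_scheme \<Rightarrow> ('a \<Rightarrow> 'k \<Rightarrow> 'a) \<Rightarrow> bool" where
  "fin_gen_kgroup G pw \<longleftrightarrow> (\<exists>S. finite S \<and> S \<subseteq> carrier G \<and> kgen G pw S = carrier G)"

definition kderived :: "('a, 'b) monoid_scheme \<Rightarrow> ('a \<Rightarrow> 'k \<Rightarrow> 'a) \<Rightarrow> 'a set \<Rightarrow> 'a set" where
  "kderived G pw H = kgen G pw (derived_set G H)"

definition isol :: "('a, 'b) monoid_scheme \<Rightarrow> ('a \<Rightarrow> 'k::zero \<Rightarrow> 'a) \<Rightarrow> 'a set \<Rightarrow> 'a set \<Rightarrow> 'a set" where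
  "isol G pw H N = {x\<in>H. \<exists>a. a \<noteq> 0 \<and> pw x a \<in> N}"

definition zcenter :: "('a, 'b) monoid_scheme \<Rightarrow> 'a set \<Rightarrow> 'a set" where
  "zcenter G H = {x\<in>H. \<forall>y\<in>H. x \<otimes>\<^bsub>G\<^esub> y = y \<otimes>\<^bsub>G\<^esub> x}"

definition Icomp :: "('a, 'b) monoid_scheme \<Rightarrow> ('a \<Rightarrow> 'k::zero \<Rightarrow> 'a) \<Rightarrow> 'a set" where
  "Icomp G pw = isol G pw (carrier G) (kderived G pw (carrier G)) \<inter> zcenter G (carrier G)"

definition int_dprod :: "('a, 'b) monoid_scheme \<Rightarrow> 'a set \<Rightarrow> 'a set \<Rightarrow> 'a set \<Rightarrow> bool" where
  "int_dprod G A B C \<longleftrightarrow> A \<inter> B = {\<one>\<^bsub>G\<^esub>} \<and>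
     (\<forall>a\<in>A. \<forall>b\<in>B. a \<otimes>\<^bsub>G\<^esub> b = b \<otimes>\<^bsub>G\<^esub> a) \<and>
     {a \<otimes>\<^bsub>G\<^esub> b | a b. a \<in> A \<and> b \<in> B} = C"

definition addition :: "('a, 'b) monoid_scheme \<Rightarrow> ('a \<Rightarrow> 'k::zero \<Rightarrow> 'a) \<Rightarrow> 'a set \<Rightarrow> bool" where
  "addition G pw G0 \<longleftrightarrow> ksubgroup G pw G0 \<and> G0 \<subseteq> zcenter G (carrier G) \<and>
     int_dprod G G0 (Icomp G pw) (zcenter G (carrier G))"

definition foundation_cond :: "('a, 'b) monoid_scheme \<Rightarrow> ('a \<Rightarrow> 'k::zero \<Rightarrow> 'a) \<Rightarrow> 'a set \<Rightarrow> bool" where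
  "foundation_cond G pw H \<longleftrightarrow> ksubgroup G pw H \<and>
     zcenter G H \<subseteq> isol G pw H (kderived G pw H)"

definition regular :: "('a, 'b) monoid_scheme \<Rightarrow> ('a \<Rightarrow> 'k::zero \<Rightarrow> 'a) \<Rightarrow> bool" where
  "regular G pw \<longleftrightarrow> (\<exists>H G0. addition G pw G0 \<and> foundation_cond G pw H \<and>
     int_dprod G H G0 (carrier G))"

definition foundation :: "('a, 'b) monoid_scheme \<Rightarrow> ('a \<Rightarrow> 'k::zero \<Rightarrow> 'a) \<Rightarrow> 'a set \<Rightarrow> bool" where
  "foundation G pw H \<longleftrightarrow> foundation_cond G pw H \<and>
     (\<exists>G0. addition G pw G0 \<and> int_dprod G H G0 (carrier G))"

definition kiso :: "('a, 'b) monoid_scheme \<Rightarrow> ('a \<Rightarrow> 'k \<Rightarrow> 'a) \<Rightarrow>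
                    ('c, 'd) monoid_scheme \<Rightarrow> ('c \<Rightarrow> 'k \<Rightarrow> 'c) \<Rightarrow> bool" where
  "kiso G p H q \<longleftrightarrow> (\<exists>f. f \<in> iso G H \<and> (\<forall>x\<in>carrier G. \<forall>a. f (p x a) = q (f x) a))"

definition dpow :: "('a \<Rightarrow> 'k \<Rightarrow> 'a) \<Rightarrow> ('c \<Rightarrow> 'k \<Rightarrow> 'c) \<Rightarrow> ('a \<times> 'c) \<Rightarrow> 'k \<Rightarrow> ('a \<times> 'c)" where
  "dpow p q xy a = (p (fst xy) a, q (snd xy) a)"

end

theory Submission
  imports Defs
begin

text \<open>
  Let H be a foundation and A an addition of G.  Since Z(G) \<inter> H \<subseteq> Z(H) \<subseteq> Is(H') \<subseteq> Is(G'),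
  the foundation meets the centre only inside I(G).  Conversely, if G = H \<times> B for some
  addition B, then the B-component of an element of I(G) lies in I(G) \<inter> B = 1, so I(G) \<subseteq> H.
  As A is a complement of I(G) in Z(G), it follows that G = H \<times> A internally, for every
  foundation H and every addition A; the multiplication map is then a K-isomorphism because
  (hk)^\<alpha> = h^\<alpha> k^\<alpha> for commuting h, k, which is the Petresco identity for a commuting pair.
  Finally, two complements of the same K-subgroup N inside a K-group C are K-isomorphic via
  the projection along N; foundations are complements of a common addition, and additions are
  complements of I(G) in Z(G).
\<close>

lemma int_dprod_iff:
  "int_dprod G A B C \<longleftrightarrow>
     A \<inter> B = {\<one>\<^bsub>G\<^esub>} \<and> (\<forall>a\<in>A. \<forall>b\<in>B. a \<otimes>\<^bsub>G\<^esub> b = b \<otimes>\<^bsub>G\<^esub> a) \<and> A <#>\<^bsub>G\<^esub> B = C"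
  by (auto simp: int_dprod_def set_mult_def)

lemma (in group) subgroup_zcenter: "subgroup (zcenter G (carrier G)) G"
proof (rule subgroupI)
  show "zcenter G (carrier G) \<subseteq> carrier G" "zcenter G (carrier G) \<noteq> {}"
    by (auto simp: zcenter_def)
  fix x y assume "x \<in> zcenter G (carrier G)" and "y \<in> zcenter G (carrier G)"
  then have x: "x \<in> carrier G" "\<And>z. z \<in> carrier G \<Longrightarrow> x \<otimes> z = z \<otimes> x"
    and y: "y \<in> carrier G" "\<And>z. z \<in> carrier G \<Longrightarrow> y \<otimes> z = z \<otimes> y"
    by (auto simp: zcenter_def)
  have "inv x \<otimes> z = z \<otimes> inv x" if z: "z \<in> carrier G" for z
  proof -
    have "z \<otimes> inv x = inv x \<otimes> (x \<otimes> z) \<otimes> inv x" using x(1) z by (simp add: m_assoc[symmetric])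
    also have "\<dots> = inv x \<otimes> (z \<otimes> x) \<otimes> inv x" by (simp only: x(2)[OF z])
    also have "\<dots> = inv x \<otimes> z" using x(1) z by (simp add: m_assoc)
    finally show ?thesis by simp
  qed
  then show "inv x \<in> zcenter G (carrier G)"
    using x(1) unfolding zcenter_def by blast
  have "x \<otimes> y \<otimes> z = z \<otimes> (x \<otimes> y)" if z: "z \<in> carrier G" for z
  proof -
    have "x \<otimes> y \<otimes> z = x \<otimes> (z \<otimes> y)" using x(1) y z by (simp add: m_assoc)
    also have "\<dots> = (x \<otimes> z) \<otimes> y" using x(1) y(1) z by (simp add: m_assoc)
    also have "\<dots> = z \<otimes> (x \<otimes> y)" using x y(1) z by (simp add: m_assoc)
    finally show ?thesis .
  qed
  then show "x \<otimes> y \<in> zcenter G (carrier G)"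
    using x(1) y(1) unfolding zcenter_def by blast
qed

lemma (in subgroup) subgroup_generated_eq:
  assumes "group G" shows "subgroup_generated G H = G\<lparr>carrier := H\<rparr>"
proof -
  have "generate G (carrier G \<inter> H) = H"
    using carrier_subgroup_generated_subgroup by (simp add: carrier_subgroup_generated)
  then show ?thesis by (simp add: subgroup_generated_def)
qed

locale internal_direct_product = group_disjoint_sum G S N for G (structure) and S N +
  assumes inter_trivial: "S \<inter> N = {\<one>}"
    and factors_commute: "\<lbrakk>s \<in> S; n \<in> N\<rbrakk> \<Longrightarrow> s \<otimes> n = n \<otimes> s"
begin

definition left_factor :: "'a \<Rightarrow> 'a" where
  "left_factor x = (THE s. s \<in> S \<and> (\<exists>n\<in>N. x = s \<otimes> n))"

lemma left_factor_eq: "\<lbrakk>s \<in> S; n \<in> N\<rbrakk> \<Longrightarrow> left_factor (s \<otimes> n) = s"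
  unfolding left_factor_def using cancel inter_trivial by (intro the_equality) blast+

lemma left_factor_decomp:
  assumes "x \<in> S <#> N"
  obtains n where "left_factor x \<in> S" "n \<in> N" "x = left_factor x \<otimes> n"
  using assms by (auto simp: set_mult_def left_factor_eq)

lemma subset_set_mult_right: "S \<subseteq> S <#> N"
proof
  fix s assume "s \<in> S"
  then have "s = s \<otimes> \<one>" by simp
  then show "s \<in> S <#> N"
    unfolding set_mult_def using \<open>s \<in> S\<close> BG.one_closed by blast
qed

lemma left_factor_mult:
  assumes "x \<in> S <#> N" "y \<in> S <#> N"
  shows "left_factor (x \<otimes> y) = left_factor x \<otimes> left_factor y"
proof -
  obtain s n s' n' where x: "s \<in> S" "n \<in> N" "x = s \<otimes> n" and y: "s' \<in> S" "n' \<in> N" "y = s' \<otimes> n'"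
    using assms by (auto simp: set_mult_def)
  have "x \<otimes> y = s \<otimes> (n \<otimes> s') \<otimes> n'"
    using x y by (simp add: m_assoc)
  also have "\<dots> = s \<otimes> (s' \<otimes> n) \<otimes> n'"
    using x y by (simp add: factors_commute)
  also have "\<dots> = (s \<otimes> s') \<otimes> (n \<otimes> n')"
    using x y by (simp add: m_assoc)
  finally show ?thesis
    using x y by (simp add: left_factor_eq)
qed

end

lemma (in group) internal_direct_product_if_int_dprod:
  "\<lbrakk>subgroup S G; subgroup N G; int_dprod G S N C\<rbrakk> \<Longrightarrow> internal_direct_product G S N"
  by (auto simp: internal_direct_product_def internal_direct_product_axioms_def
      group_disjoint_sum_def int_dprod_def is_group)

lemma (in group) left_factor_left_factor:
  assumes D: "internal_direct_product G S N" and D': "internal_direct_product G S' N"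
    and eq: "S <#> N = S' <#> N" and x: "x \<in> S"
  shows "internal_direct_product.left_factor G S N (internal_direct_product.left_factor G S' N x) = x"
proof -
  interpret D: internal_direct_product G S N by (rule D)
  interpret D': internal_direct_product G S' N by (rule D')
  obtain n where n: "D'.left_factor x \<in> S'" "n \<in> N" "x = D'.left_factor x \<otimes> n"
    using D'.left_factor_decomp x D.subset_set_mult_right eq by blast
  have "D'.left_factor x = x \<otimes> inv n"
    using n(1,2) by (subst n(3)) (simp add: m_assoc)
  then show ?thesis
    using D.left_factor_eq[OF x D.BG.m_inv_closed[OF n(2)]] by simp
qed

lemma kiso_sym:
  assumes "group G" and "kiso G p H q" and "\<And>x a. x \<in> carrier G \<Longrightarrow> p x a \<in> carrier G"
  shows "kiso H q G p"
proof -
  obtain f where f: "f \<in> iso G H" and f_pw: "\<And>x a. x \<in> carrier G \<Longrightarrow> f (p x a) = q (f x) a"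
    using assms(2) by (auto simp: kiso_def)
  let ?g = "inv_into (carrier G) f"
  have bij: "bij_betw f (carrier G) (carrier H)"
    using f by (simp add: iso_def)
  have "?g (q y a) = p (?g y) a" if y: "y \<in> carrier H" for y a
  proof -
    have gy: "?g y \<in> carrier G" and "f (?g y) = y"
      using bij y by (auto simp: bij_betw_def inv_into_into f_inv_into_f)
    then have "q y a = f (p (?g y) a)"
      using f_pw by simp
    then show ?thesis
      using bij gy assms(3) by (simp add: bij_betw_def)
  qed
  then show ?thesis
    using group.iso_set_sym[OF assms(1) f] by (auto simp: kiso_def)
qed

lemma kbin_Suc_0: "kbin (a::'k::{idom,ring_char_0}) (Suc 0) = a"
  unfolding kbin_def by simp

lemma lprod_all_one:
  "monoid G \<Longrightarrow> \<forall>x\<in>set xs. x = \<one>\<^bsub>G\<^esub> \<Longrightarrow> lprod G xs = \<one>\<^bsub>G\<^esub>"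
  by (induction xs) (auto simp: lprod_def monoid.l_one)

lemma lprod_map_upt_eq_first:
  assumes "monoid G" "0 < n" "f 0 \<in> carrier G" "\<And>i. \<lbrakk>0 < i; i < n\<rbrakk> \<Longrightarrow> f i = \<one>\<^bsub>G\<^esub>"
  shows "lprod G (map f [0..<n]) = f 0"
proof -
  have "lprod G (map f [Suc 0..<n]) = \<one>\<^bsub>G\<^esub>"
    using assms(1,4) by (intro lprod_all_one) auto
  then show ?thesis
    using assms(1-3) by (simp add: upt_conv_Cons lprod_def monoid.r_one)
qed

text \<open>For commuting x and y we have x^n y^n = (xy)^n, so all higher Petresco words are trivial.\<close>

lemma (in group) petresco_list_commuting_pair:
  assumes "x \<in> carrier G" "y \<in> carrier G" "x \<otimes> y = y \<otimes> x" "1 \<le> n"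
  shows "petresco_list G [x, y] n = (x \<otimes> y) # replicate (n - 1) \<one>"
  using assms(4)
proof (induction n rule: dec_induct)
  case base
  show ?case using assms by (simp add: lprod_def)
next
  case (step n)
  let ?ts = "petresco_list G [x, y] n"
  have "lprod G (map (\<lambda>i. (?ts ! i) [^] (Suc n choose Suc i)) [0..<n]) = (x \<otimes> y) [^] Suc n"
    using step assms by (subst lprod_map_upt_eq_first) (auto simp: nth_Cons')
  also have "\<dots> = lprod G (map (\<lambda>z. z [^] Suc n) [x, y])"
    using pow_mult_distrib[OF assms(3,1,2), of "Suc n"] assms(1,2) by (simp add: lprod_def del: nat_pow_Suc)
  finally have "petresco_list G [x, y] (Suc n) = ?ts @ [\<one>]"
    using assms by (simp add: Let_def lprod_def)
  then show ?case
    using step by (cases n) (auto simp: replicate_append_same)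
qed

locale K_group =
  fixes G :: "('a, 'b) monoid_scheme" (structure) and pw :: "'a \<Rightarrow> 'k::{idom,ring_char_0} \<Rightarrow> 'a"
  assumes kgroup: "kgroup G pw"

sublocale K_group \<subseteq> group G
  using kgroup by (simp add: kgroup_def)

context K_group
begin

lemma pw_closed [simp]: "x \<in> carrier G \<Longrightarrow> pw x a \<in> carrier G"
  and pw_add: "x \<in> carrier G \<Longrightarrow> pw x a \<otimes> pw x b = pw x (a + b)"
  and pw_pw: "x \<in> carrier G \<Longrightarrow> pw (pw x a) b = pw x (a * b)"
  and pw_conj: "\<lbrakk>x \<in> carrier G; y \<in> carrier G\<rbrakk> \<Longrightarrow> pw (inv y \<otimes> x \<otimes> y) a = inv y \<otimes> pw x a \<otimes> y"
  and pw_lprod: "set xs \<subseteq> carrier G \<Longrightarrow> lprod G (map (\<lambda>x. pw x a) xs) =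
        lprod G (map (\<lambda>i. pw (petresco_list G xs (nilclass G) ! i) (kbin a (Suc i)))
                     [0..<nilclass G])"
  using kgroup by (simp_all add: kgroup_def)

lemma pw_zero: "x \<in> carrier G \<Longrightarrow> pw x 0 = \<one>"
  using pw_add[of x 0 0] by (metis add_0 pw_closed r_one one_closed l_cancel)

lemma pw_one_elem [simp]: "pw \<one> a = \<one>"
  using pw_pw[of \<one> 0 a] pw_zero by simp

lemma nilclass_eq_0_imp_trivial: "nilclass G = 0 \<Longrightarrow> carrier G = {\<one>}"
proof -
  have "\<exists>c. lcs G c = {\<one>}"
    using kgroup by (simp add: kgroup_def nilpotent_def)
  then have "lcs G (nilclass G) = {\<one>}"
    unfolding nilclass_def by (rule LeastI_ex)
  then show "nilclass G = 0 \<Longrightarrow> carrier G = {\<one>}" by simp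
qed

lemma pw_mult_commuting:
  assumes x: "x \<in> carrier G" and y: "y \<in> carrier G" and xy: "x \<otimes> y = y \<otimes> x"
  shows "pw (x \<otimes> y) a = pw x a \<otimes> pw y a"
proof (cases "nilclass G = 0")
  case True
  then show ?thesis using x y nilclass_eq_0_imp_trivial by auto
next
  case False
  have pet: "petresco_list G [x, y] (nilclass G) = (x \<otimes> y) # replicate (nilclass G - 1) \<one>"
    using False petresco_list_commuting_pair[OF x y xy] by simp
  have "pw x a \<otimes> pw y a = lprod G (map (\<lambda>z. pw z a) [x, y])"
    using x y by (simp add: lprod_def)
  also have "\<dots> = lprod G (map (\<lambda>i. pw (petresco_list G [x, y] (nilclass G) ! i) (kbin a (Suc i)))
                     [0..<nilclass G])"
    using pw_lprod[of "[x, y]" a] x y by simp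
  also have "\<dots> = pw (x \<otimes> y) (kbin a (Suc 0))"
    using x y False by (subst lprod_map_upt_eq_first) (auto simp: pet nth_Cons')
  finally show ?thesis by (simp add: kbin_Suc_0)
qed

lemma pw_inv: "x \<in> carrier G \<Longrightarrow> pw (inv x) a = inv (pw x a)"
  using pw_mult_commuting[of "inv x" x a] by (simp add: inv_equality)

lemma ksubgroup_kgen: "S \<subseteq> carrier G \<Longrightarrow> ksubgroup G pw (kgen G pw S)"
proof -
  let ?F = "{T. ksubgroup G pw T \<and> S \<subseteq> T}"
  assume "S \<subseteq> carrier G"
  then have "carrier G \<in> ?F"
    by (simp add: ksubgroup_def subgroup_self)
  then have "subgroup (\<Inter>?F) G"
    by (intro subgroups_Inter) (auto simp: ksubgroup_def)
  then show ?thesis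
    by (auto simp: kgen_def ksubgroup_def)
qed

lemma kgen_mono: "S \<subseteq> T \<Longrightarrow> kgen G pw S \<subseteq> kgen G pw T"
  unfolding kgen_def by blast

lemma pw_zcenter:
  assumes x: "x \<in> zcenter G (carrier G)"
  shows "pw x a \<in> zcenter G (carrier G)"
proof -
  have xc: "x \<in> carrier G" using x by (simp add: zcenter_def)
  have "pw x a \<otimes> y = y \<otimes> pw x a" if y: "y \<in> carrier G" for y
  proof -
    have "inv y \<otimes> x \<otimes> y = x"
      using x y by (simp add: zcenter_def m_assoc) (simp add: m_assoc[symmetric])
    then have "pw x a = inv y \<otimes> pw x a \<otimes> y"
      using pw_conj[OF xc y, of a] by simp
    then show ?thesis
      using xc y by (simp add: m_assoc inv_solve_left)
  qed
  then show ?thesis using xc by (simp add: zcenter_def)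
qed

lemma ksubgroup_Icomp: "ksubgroup G pw (Icomp G pw)"
proof -
  let ?N = "kderived G pw (carrier G)" and ?Z = "zcenter G (carrier G)"
  have N: "subgroup ?N G" "\<And>x a. x \<in> ?N \<Longrightarrow> pw x a \<in> ?N"
    using ksubgroup_kgen[OF derived_set_in_carrier[OF subset_refl]]
    by (auto simp: kderived_def ksubgroup_def)
  have Z: "subgroup ?Z G"
    by (rule subgroup_zcenter)
  have mem: "x \<in> Icomp G pw \<longleftrightarrow> x \<in> ?Z \<and> (\<exists>a. a \<noteq> 0 \<and> pw x a \<in> ?N)" for x
    by (auto simp: Icomp_def isol_def zcenter_def)
  have "subgroup (Icomp G pw) G"
  proof (rule subgroupI)
    show "Icomp G pw \<subseteq> carrier G"
      by (auto simp: mem zcenter_def)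
    have "\<one> \<in> Icomp G pw"
      unfolding mem using subgroup.one_closed[OF N(1)] subgroup.one_closed[OF Z] by (auto intro!: exI[of _ 1])
    then show "Icomp G pw \<noteq> {}" by blast
    fix x y assume "x \<in> Icomp G pw" "y \<in> Icomp G pw"
    then obtain a b where x: "x \<in> ?Z" "a \<noteq> 0" "pw x a \<in> ?N" and y: "y \<in> ?Z" "b \<noteq> 0" "pw y b \<in> ?N"
      by (auto simp: mem)
    have xc: "x \<in> carrier G" and yc: "y \<in> carrier G" using x y by (auto simp: zcenter_def)
    show "inv x \<in> Icomp G pw"
      using x subgroup.m_inv_closed[OF Z] subgroup.m_inv_closed[OF N(1)] pw_inv[OF xc] by (auto simp: mem)
    have "pw (x \<otimes> y) (a * b) = pw (pw x a) b \<otimes> pw (pw y b) a"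
      using pw_mult_commuting[OF xc yc] x(1) yc pw_pw xc by (simp add: zcenter_def mult.commute)
    then have "pw (x \<otimes> y) (a * b) \<in> ?N"
      using x(3) y(3) N subgroup.m_closed[OF N(1)] by simp
    then show "x \<otimes> y \<in> Icomp G pw"
      using x y subgroup.m_closed[OF Z] by (auto simp: mem intro!: exI[of _ "a * b"])
  qed
  moreover have "pw x c \<in> Icomp G pw" if I: "x \<in> Icomp G pw" for x c
  proof -
    obtain a where x: "x \<in> ?Z" "a \<noteq> 0" "pw x a \<in> ?N"
      using I by (auto simp: mem)
    then have "pw (pw x c) a = pw (pw x a) c"
      using pw_pw by (simp add: zcenter_def mult.commute)
    then show ?thesis
      using x pw_zcenter N(2) by (auto simp: mem)
  qed
  ultimately show ?thesis
    by (simp add: ksubgroup_def)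
qed

lemma left_factor_pw:
  assumes D: "internal_direct_product G S N" and "ksubgroup G pw S" "ksubgroup G pw N"
    and x: "x \<in> S <#> N"
  shows "internal_direct_product.left_factor G S N (pw x a) = pw (internal_direct_product.left_factor G S N x) a"
proof -
  interpret D: internal_direct_product G S N by (rule D)
  obtain n where n: "D.left_factor x \<in> S" "n \<in> N" "x = D.left_factor x \<otimes> n"
    using D.left_factor_decomp[OF x] by blast
  from n(3) have "pw x a = pw (D.left_factor x \<otimes> n) a"
    by (rule arg_cong)
  also have "\<dots> = pw (D.left_factor x) a \<otimes> pw n a"
    using D.factors_commute[OF n(1,2)] by (intro pw_mult_commuting) (use n(1,2) in auto)
  finally have "pw x a = pw (D.left_factor x) a \<otimes> pw n a" .
  moreover have "pw (D.left_factor x) a \<in> S" "pw n a \<in> N"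
    using n(1,2) assms(2,3) by (auto simp: ksubgroup_def)
  ultimately show ?thesis
    by (simp add: D.left_factor_eq)
qed

lemma kiso_int_dprod_DirProd:
  assumes H: "ksubgroup G pw H" and A: "ksubgroup G pw A" and HA: "int_dprod G H A (carrier G)"
  shows "kiso G pw (G\<lparr>carrier := H\<rparr> \<times>\<times> G\<lparr>carrier := A\<rparr>) (dpow pw pw)"
proof (rule kiso_sym)
  interpret group_disjoint_sum G H A
    using H A by (simp add: group_disjoint_sum_def ksubgroup_def is_group)
  show "group (G\<lparr>carrier := H\<rparr> \<times>\<times> G\<lparr>carrier := A\<rparr>)"
    by (intro DirProd_group AG.subgroup_is_group BG.subgroup_is_group is_group)
  show "dpow pw pw x a \<in> carrier (G\<lparr>carrier := H\<rparr> \<times>\<times> G\<lparr>carrier := A\<rparr>)"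
    if "x \<in> carrier (G\<lparr>carrier := H\<rparr> \<times>\<times> G\<lparr>carrier := A\<rparr>)" for x a
    using that H A by (auto simp: dpow_def ksubgroup_def)
  have "(\<lambda>(x, y). x \<otimes> y) \<in> iso (G\<lparr>carrier := H\<rparr> \<times>\<times> G\<lparr>carrier := A\<rparr>) G"
    using iso_group_mul_alt HA
    unfolding int_dprod_iff AG.subgroup_generated_eq[OF is_group] BG.subgroup_generated_eq[OF is_group]
    by blast
  moreover have "pw (h \<otimes> a) b = pw h b \<otimes> pw a b" if "h \<in> H" "a \<in> A" for h a b
    using HA that by (intro pw_mult_commuting) (auto simp: int_dprod_def)
  ultimately show "kiso (G\<lparr>carrier := H\<rparr> \<times>\<times> G\<lparr>carrier := A\<rparr>) (dpow pw pw) G pw"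
    by (auto simp: kiso_def dpow_def DirProd_def)
qed

lemma kiso_common_complement:
  assumes S1: "ksubgroup G pw S1" and S2: "ksubgroup G pw S2" and N: "ksubgroup G pw N"
    and d1: "int_dprod G S1 N C" and d2: "int_dprod G S2 N C"
  shows "kiso (G\<lparr>carrier := S1\<rparr>) pw (G\<lparr>carrier := S2\<rparr>) pw"
proof -
  have D1: "internal_direct_product G S1 N"
    using S1 N d1 by (simp add: ksubgroup_def internal_direct_product_if_int_dprod)
  have D2: "internal_direct_product G S2 N"
    using S2 N d2 by (simp add: ksubgroup_def internal_direct_product_if_int_dprod)
  interpret D1: internal_direct_product G S1 N by (rule D1)
  interpret D2: internal_direct_product G S2 N by (rule D2)
  have C: "S1 <#> N = S2 <#> N"
    using d1 d2 by (simp add: int_dprod_iff)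
  have S1C: "x \<in> S2 <#> N" if "x \<in> S1" for x
    using that D1.subset_set_mult_right C by blast
  have S2C: "y \<in> S1 <#> N" if "y \<in> S2" for y
    using that D2.subset_set_mult_right C by blast
  have into_S2: "D2.left_factor x \<in> S2" if "x \<in> S1" for x
    using D2.left_factor_decomp[OF S1C[OF that]] by blast
  have into_S1: "D1.left_factor y \<in> S1" if "y \<in> S2" for y
    using D1.left_factor_decomp[OF S2C[OF that]] by blast
  have bij: "bij_betw D2.left_factor S1 S2"
  proof (rule bij_betw_byWitness[where f'=D1.left_factor])
    show "\<forall>x\<in>S1. D1.left_factor (D2.left_factor x) = x"
      using left_factor_left_factor[OF D1 D2 C] by blast
    show "\<forall>y\<in>S2. D2.left_factor (D1.left_factor y) = y"
      using left_factor_left_factor[OF D2 D1 C[symmetric]] by blast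
  qed (use into_S2 into_S1 in blast)+
  have "D2.left_factor (x \<otimes> y) = D2.left_factor x \<otimes> D2.left_factor y" if "x \<in> S1" "y \<in> S1" for x y
    using that S1C D2.left_factor_mult by blast
  with bij into_S2 have iso: "D2.left_factor \<in> iso (G\<lparr>carrier := S1\<rparr>) (G\<lparr>carrier := S2\<rparr>)"
    by (simp add: iso_def hom_def)
  have "D2.left_factor (pw x a) = pw (D2.left_factor x) a" if "x \<in> S1" for x a
    using left_factor_pw[OF D2 S2 N S1C[OF that]] .
  with iso show ?thesis
    unfolding kiso_def by (intro exI[of _ D2.left_factor]) simp
qed

lemma foundation_inter_zcenter_subset_Icomp:
  assumes "foundation_cond G pw H"
  shows "H \<inter> zcenter G (carrier G) \<subseteq> Icomp G pw"
proof
  fix x assume x: "x \<in> H \<inter> zcenter G (carrier G)"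
  have H: "H \<subseteq> carrier G"
    using assms by (auto simp: foundation_cond_def ksubgroup_def dest: subgroup.mem_carrier)
  then have "x \<in> zcenter G H"
    using x by (auto simp: zcenter_def)
  then obtain a where "a \<noteq> 0" "pw x a \<in> kgen G pw (derived_set G H)"
    using assms by (auto simp: foundation_cond_def isol_def kderived_def)
  moreover have "kgen G pw (derived_set G H) \<subseteq> kderived G pw (carrier G)"
    unfolding kderived_def using H by (intro kgen_mono mono_derived_set)
  ultimately show "x \<in> Icomp G pw"
    using x H by (auto simp: Icomp_def isol_def)
qed

lemma Icomp_subset_foundation:
  assumes H: "foundation_cond G pw H" and B: "addition G pw B" and HB: "int_dprod G H B (carrier G)"
  shows "Icomp G pw \<subseteq> H"
proof
  let ?Z = "zcenter G (carrier G)"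
  interpret Z: subgroup ?Z G by (rule subgroup_zcenter)
  have BZ: "B \<subseteq> ?Z" and BI: "B \<inter> Icomp G pw = {\<one>}" and IZ: "Icomp G pw \<subseteq> ?Z"
    using B by (auto simp: addition_def int_dprod_def Icomp_def)
  have "subgroup H G" "subgroup (Icomp G pw) G"
    using H ksubgroup_Icomp by (auto simp: foundation_cond_def ksubgroup_def)
  then interpret H: subgroup H G + I: subgroup "Icomp G pw" G .
  fix z assume z: "z \<in> Icomp G pw"
  have "z \<in> {h \<otimes> b | h b. h \<in> H \<and> b \<in> B}"
    using HB I.mem_carrier[OF z] by (simp add: int_dprod_def)
  then obtain h b where hb: "h \<in> H" "b \<in> B" "z = h \<otimes> b"
    by blast
  have b: "b \<in> carrier G" using hb BZ by auto
  then have "h = z \<otimes> inv b"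
    using hb H.mem_carrier by (simp add: m_assoc)
  then have "h \<in> H \<inter> ?Z"
    using hb(1,2) z BZ IZ by auto
  then have "h \<in> Icomp G pw"
    using foundation_inter_zcenter_subset_Icomp[OF H] by blast
  then have "inv h \<otimes> z \<in> Icomp G pw"
    using z by simp
  moreover have "inv h \<otimes> z = b"
    using hb b H.mem_carrier by (simp add: m_assoc[symmetric])
  ultimately have "b = \<one>"
    using BI hb(2) by blast
  then show "z \<in> H"
    using hb H.mem_carrier by simp
qed

lemma foundation_addition_cover:
  assumes H: "foundation G pw H" and A: "addition G pw A"
  shows "carrier G \<subseteq> {h \<otimes> a | h a. h \<in> H \<and> a \<in> A}"
proof
  let ?Z = "zcenter G (carrier G)"
  obtain B where B: "addition G pw B" and HB: "int_dprod G H B (carrier G)"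
    using H by (auto simp: foundation_def)
  have IH: "Icomp G pw \<subseteq> H"
    using H B HB by (intro Icomp_subset_foundation) (auto simp: foundation_def)
  have AZ: "A \<subseteq> ?Z" and ZAI: "?Z = {a \<otimes> z | a z. a \<in> A \<and> z \<in> Icomp G pw}"
    and BZ: "B \<subseteq> ?Z"
    using A B by (auto simp: addition_def int_dprod_def)
  have "subgroup H G"
    using H by (auto simp: foundation_def foundation_cond_def ksubgroup_def)
  then interpret H: subgroup H G .
  fix g assume g: "g \<in> carrier G"
  have "g \<in> {h \<otimes> b | h b. h \<in> H \<and> b \<in> B}"
    using HB g by (simp add: int_dprod_def)
  then obtain h b where hb: "h \<in> H" "b \<in> B" "g = h \<otimes> b"
    by blast
  then obtain a z where az: "a \<in> A" "z \<in> Icomp G pw" "b = a \<otimes> z"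
    using BZ ZAI by blast
  have c: "a \<in> carrier G" "z \<in> carrier G"
    using az IH AZ by (auto simp: zcenter_def)
  have "a \<otimes> z = z \<otimes> a"
    using az(1) AZ c(2) by (auto simp: zcenter_def)
  then have "g = h \<otimes> (z \<otimes> a)"
    using hb(3) az(3) by simp
  also have "\<dots> = (h \<otimes> z) \<otimes> a"
    using hb(1) c by (simp add: m_assoc)
  finally show "g \<in> {h \<otimes> a | h a. h \<in> H \<and> a \<in> A}"
    using hb(1) az(1,2) IH by blast
qed

lemma int_dprod_foundation_addition:
  assumes H: "foundation G pw H" and A: "addition G pw A"
  shows "int_dprod G H A (carrier G)"
proof -
  have "subgroup H G" "subgroup A G"
    using H A by (auto simp: foundation_def foundation_cond_def addition_def ksubgroup_def)
  then interpret H: subgroup H G + A: subgroup A G .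
  have AZ: "A \<subseteq> zcenter G (carrier G)" and AI: "A \<inter> Icomp G pw = {\<one>}"
    using A by (auto simp: addition_def int_dprod_def)
  then have "H \<inter> A \<subseteq> {\<one>}"
    using foundation_inter_zcenter_subset_Icomp H by (auto simp: foundation_def)
  then have "H \<inter> A = {\<one>}"
    using H.one_closed A.one_closed by blast
  moreover have "\<forall>h\<in>H. \<forall>a\<in>A. h \<otimes> a = a \<otimes> h"
    using AZ by (auto simp: zcenter_def)
  moreover have "{h \<otimes> a | h a. h \<in> H \<and> a \<in> A} = carrier G"
    using foundation_addition_cover[OF H A] by auto
  ultimately show ?thesis
    by (simp add: int_dprod_def)
qed

end

theorem mainTheorem10:
  fixes G :: "'a monoid" and pw :: "'a \<Rightarrow> 'k::{idom,ring_char_0} \<Rightarrow> 'a"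
  assumes "binomial_domain TYPE('k)" and "pid TYPE('k)"
    and "kgroup G pw" and "fin_gen_kgroup G pw" and "regular G pw"
  shows "(\<forall>H G0. foundation G pw H \<and> addition G pw G0 \<longrightarrow>
            kiso G pw (G\<lparr>carrier := H\<rparr> \<times>\<times> G\<lparr>carrier := G0\<rparr>) (dpow pw pw))
       \<and> (\<forall>H1 H2. foundation G pw H1 \<and> foundation G pw H2 \<longrightarrow>
            kiso (G\<lparr>carrier := H1\<rparr>) pw (G\<lparr>carrier := H2\<rparr>) pw)
       \<and> (\<forall>A1 A2. addition G pw A1 \<and> addition G pw A2 \<longrightarrow>
            kiso (G\<lparr>carrier := A1\<rparr>) pw (G\<lparr>carrier := A2\<rparr>) pw)"
proof -
  interpret K_group G pw
    by (rule K_group.intro) fact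
  have ks: "ksubgroup G pw H" if "foundation G pw H \<or> addition G pw H" for H
    using that by (auto simp: foundation_def foundation_cond_def addition_def)
  have "kiso G pw (G\<lparr>carrier := H\<rparr> \<times>\<times> G\<lparr>carrier := A\<rparr>) (dpow pw pw)"
    if "foundation G pw H" "addition G pw A" for H A
    using kiso_int_dprod_DirProd ks that int_dprod_foundation_addition by blast
  moreover have "kiso (G\<lparr>carrier := H1\<rparr>) pw (G\<lparr>carrier := H2\<rparr>) pw"
    if H: "foundation G pw H1" "foundation G pw H2" for H1 H2
  proof -
    obtain B where "addition G pw B"
      using H(1) by (auto simp: foundation_def)
    then show ?thesis
      using kiso_common_complement ks H int_dprod_foundation_addition by blast
  qed
  moreover have "kiso (G\<lparr>carrier := A1\<rparr>) pw (G\<lparr>carrier := A2\<rparr>) pw"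
    if "addition G pw A1" "addition G pw A2" for A1 A2
    using kiso_common_complement ks that ksubgroup_Icomp by (metis addition_def)
  ultimately show ?thesis
    by blast
qed

end
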